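(* Let $\Omega$ be a region of $\mathbb{C}$ and let $F:\Omega\to\mathbb{M}_n$ be analytic. Suppose there is $z_0\in\Omega$ such that $\|F(z)\|\leq\|F(z_0)\|$ for all $z\in\Omega$, and set \[d=\dim\{x\in\mathbb{C}^n:\ \|F(z_0)x\|=\|F(z_0)\|\cdot\|x\|\}.\] Then there are $n\times n$ unitary matrices $U$ and $V$ such that $F(z)=\|F(z_0)\|\,UV$ for all $z\in\Omega$ when $d=n$, or, when $d<n$, there is in addition an analytic function $R:\Omega\to\mathbb{M}_{n-d}$ such that \[F(z)=U\begin{bmatrix}\|F(z_0)\|\cdot I_d & 0\\ 0 & R(z)\end{bmatrix}V\quad\text{for all }z\in\Omega.\] In particular, whenever $x\in\mathbb{C}^n$ satisfies $\|F(z_0)x\|=\|F(z_0)\|\cdot\|x\|$, the map $z\mapsto F(z)x$ is constant on $\Omega$ and $F^{(k)}(z_0)x=0$ for all $k\geq1$.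
   Context: A region is a nonempty open connected subset of $\mathbb{C}$. $\mathbb{M}_n$ is the set of $n\times n$ complex matrices; $F$ is analytic if each entry is analytic, and $F^{(k)}$ denotes its $k$th derivative. $\|x\|$ is the Euclidean norm on $\mathbb{C}^n$ and $\|T\|$ the induced operator norm. $I_d$ is the $d\times d$ identity matrix. A matrix $A$ is unitary if $A^*A=AA^*=I$. *)

theory Defs
  imports "Jordan_Normal_Form.Schur_Decomposition" "HOL-Analysis.Analysis"
begin

definition vnorm :: "complex Matrix.vec \<Rightarrow> real" where
  "vnorm x = sqrt (\<Sum>i<dim_vec x. (cmod (vec_index x i))^2)"

definition opnorm :: "complex mat \<Rightarrow> real" where
  "opnorm A = Sup {vnorm (mult_mat_vec A x) | x. x \<in> carrier_vec (dim_col A) \<and> vnorm x \<le> 1}"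

definition unitary_mat :: "nat \<Rightarrow> complex mat \<Rightarrow> bool" where
  "unitary_mat n A \<longleftrightarrow> A \<in> carrier_mat n n \<and> mat_adjoint A * A = 1\<^sub>m n \<and> A * mat_adjoint A = 1\<^sub>m n"

definition cdim :: "nat \<Rightarrow> complex Matrix.vec set \<Rightarrow> nat" where
  "cdim n W = vectorspace.dim class_ring
     ((module_vec TYPE(complex) n)\<lparr>carrier := LinearCombinations.module.span class_ring (module_vec TYPE(complex) n) W\<rparr>)"

definition mat_analytic_on :: "nat \<Rightarrow> (complex \<Rightarrow> complex mat) \<Rightarrow> complex set \<Rightarrow> bool" where
  "mat_analytic_on m F S \<longleftrightarrow> (\<forall>z\<in>S. F z \<in> carrier_mat m m) \<and>
     (\<forall>i<m. \<forall>j<m. (\<lambda>z. F z $$ (i,j)) analytic_on S)"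

definition mat_deriv :: "nat \<Rightarrow> nat \<Rightarrow> (complex \<Rightarrow> complex mat) \<Rightarrow> complex \<Rightarrow> complex mat" where
  "mat_deriv m k F z = Matrix.mat m m (\<lambda>(i,j). (deriv ^^ k) (\<lambda>w. F w $$ (i,j)) z)"

end

theory Submission
  imports Defs "Jordan_Normal_Form.DL_Rank" "HOL-Complex_Analysis.Complex_Analysis"
begin

text \<open>Let \<open>c = \<parallel>F z0\<parallel>\<close> and let \<open>x\<close> satisfy \<open>\<parallel>F z0 x\<parallel> = c \<parallel>x\<parallel>\<close>. The holomorphic function
  \<open>z \<mapsto> \<langle>F z x, F z0 x\<rangle>\<close> is bounded in modulus by \<open>c\<^sup>2 \<parallel>x\<parallel>\<^sup>2\<close> and attains this bound at \<open>z0\<close>, so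
  by the maximum modulus principle it is constant, and equality in Cauchy--Schwarz forces
  \<open>F z x = F z0 x\<close>; in particular all derivatives of \<open>z \<mapsto> F z x\<close> vanish. Since \<open>\<parallel>F z\<parallel> \<le> c\<close>,
  such an \<open>x\<close> is also an eigenvector of \<open>(F z)\<^sup>* F z\<close> for \<open>c\<^sup>2\<close>. Hence every \<open>F z\<close> maps the extremal
  subspace \<open>M\<close> by \<open>c\<close> times an isometry onto the fixed space \<open>F z0 M\<close>, and maps \<open>M\<^sup>\<bottom>\<close> into
  \<open>(F z0 M)\<^sup>\<bottom>\<close>. Orthonormal bases adapted to these two decompositions give the block form with
  upper left block \<open>c I\<^sub>d\<close>; the lower right block consists of inner products \<open>\<langle>F z r, t\<rangle>\<close> and is
  therefore analytic.\<close>

no_notation Finite_Cartesian_Product.vec_nth (infixl \<open>$\<close> 90)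
no_notation fps_nth (infixl \<open>$\<close> 75)

section \<open>Inner product and operator norm\<close>

definition vinner :: "complex Matrix.vec \<Rightarrow> complex Matrix.vec \<Rightarrow> complex" where
  "vinner x y = (\<Sum>i<dim_vec x. x $ i * cnj (y $ i))"

lemma cscalar_prod_eq_vinner: "x \<in> carrier_vec n \<Longrightarrow> y \<in> carrier_vec n \<Longrightarrow> x \<bullet>c y = vinner x y"
  unfolding vinner_def scalar_prod_def by (auto simp: atLeast0LessThan intro!: sum.cong)

lemma vnorm_square_vinner: "complex_of_real (vnorm x ^ 2) = vinner x x"
proof -
  have "vnorm x ^ 2 = (\<Sum>i<dim_vec x. (cmod (x $ i))^2)"
    unfolding vnorm_def by (simp add: sum_nonneg)
  then have "complex_of_real (vnorm x ^ 2) = (\<Sum>i<dim_vec x. complex_of_real ((cmod (x $ i))^2))"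
    by simp
  also have "\<dots> = vinner x x" unfolding vinner_def by (simp only: complex_norm_square)
  finally show ?thesis .
qed

lemma vnorm_square: "vnorm x ^ 2 = Re (vinner x x)"
  using vnorm_square_vinner[of x] by (metis Re_complex_of_real)

lemma vnorm_nonneg: "vnorm x \<ge> 0"
  unfolding vnorm_def by (simp add: sum_nonneg)

lemma vnorm_eq_L2_set: "vnorm x = L2_set (\<lambda>i. cmod (x $ i)) {..<dim_vec x}"
  unfolding vnorm_def L2_set_def by simp

lemma vnorm_eq_0_iff: "x \<in> carrier_vec n \<Longrightarrow> vnorm x = 0 \<longleftrightarrow> x = 0\<^sub>v n"
proof
  assume x: "x \<in> carrier_vec n" and v: "vnorm x = 0"
  have "(\<Sum>i<n. (cmod (x $ i))^2) = 0" using v x unfolding vnorm_def by simp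
  then have "\<forall>i\<in>{..<n}. (cmod (x $ i))^2 = 0"
    by (subst sum_nonneg_eq_0_iff[symmetric]) auto
  then show "x = 0\<^sub>v n" using x by (intro eq_vecI) auto
next
  assume "x \<in> carrier_vec n" "x = 0\<^sub>v n"
  then show "vnorm x = 0" unfolding vnorm_def by simp
qed

lemma vinner_add_left: "x \<in> carrier_vec n \<Longrightarrow> y \<in> carrier_vec n \<Longrightarrow> z \<in> carrier_vec n \<Longrightarrow>
  vinner (x + y) z = vinner x z + vinner y z"
  unfolding vinner_def by (auto simp: sum.distrib distrib_right)

lemma vinner_add_right: "x \<in> carrier_vec n \<Longrightarrow> y \<in> carrier_vec n \<Longrightarrow> z \<in> carrier_vec n \<Longrightarrow>
  vinner x (y + z) = vinner x y + vinner x z"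
  unfolding vinner_def by (auto simp: sum.distrib distrib_left)

lemma vinner_minus_left: "x \<in> carrier_vec n \<Longrightarrow> y \<in> carrier_vec n \<Longrightarrow> z \<in> carrier_vec n \<Longrightarrow>
  vinner (x - y) z = vinner x z - vinner y z"
  unfolding vinner_def by (auto simp: sum_subtractf left_diff_distrib)

lemma vinner_smult_left: "vinner (a \<cdot>\<^sub>v x) y = a * vinner x y"
  unfolding vinner_def by (auto simp: sum_distrib_left ac_simps)

lemma vinner_smult_right: "dim_vec y = dim_vec x \<Longrightarrow> vinner x (a \<cdot>\<^sub>v y) = cnj a * vinner x y"
  unfolding vinner_def by (auto simp: sum_distrib_left ac_simps)

lemma cnj_vinner: "dim_vec y = dim_vec x \<Longrightarrow> cnj (vinner x y) = vinner y x"
  unfolding vinner_def by (auto simp: ac_simps)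

lemma vinner_self_eq_0_iff: "x \<in> carrier_vec n \<Longrightarrow> vinner x x = 0 \<longleftrightarrow> x = 0\<^sub>v n"
  using vnorm_square_vinner[of x] vnorm_eq_0_iff[of x n] by (metis of_real_eq_0_iff power_eq_0_iff zero_less_numeral)

lemma norm_vinner_le: "dim_vec y = dim_vec x \<Longrightarrow> cmod (vinner x y) \<le> vnorm x * vnorm y"
proof -
  assume d: "dim_vec y = dim_vec x"
  have "cmod (vinner x y) \<le> (\<Sum>i<dim_vec x. cmod (x $ i * cnj (y $ i)))"
    unfolding vinner_def by (rule norm_sum)
  also have "\<dots> = (\<Sum>i<dim_vec x. \<bar>cmod (x $ i)\<bar> * \<bar>cmod (y $ i)\<bar>)"
    by (simp add: norm_mult)
  also have "\<dots> \<le> L2_set (\<lambda>i. cmod (x $ i)) {..<dim_vec x} * L2_set (\<lambda>i. cmod (y $ i)) {..<dim_vec x}"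
    by (rule L2_set_mult_ineq)
  also have "\<dots> = vnorm x * vnorm y" using d by (simp add: vnorm_eq_L2_set)
  finally show ?thesis .
qed

lemma vnorm_smult: "vnorm (a \<cdot>\<^sub>v x) = cmod a * vnorm x"
proof -
  have "vnorm (a \<cdot>\<^sub>v x) ^ 2 = (cmod a * vnorm x) ^ 2"
    unfolding vnorm_square power_mult_distrib
    by (simp add: vinner_smult_left vinner_smult_right flip: vnorm_square) (use cmod_power2[of a] in \<open>simp add: power2_eq_square algebra_simps\<close>)
  then show ?thesis using vnorm_nonneg[of x] vnorm_nonneg[of "a \<cdot>\<^sub>v x"]
    by (simp add: power2_eq_iff_nonneg)
qed

lemma index_mult_mat_vec_sum: "A \<in> carrier_mat n n \<Longrightarrow> x \<in> carrier_vec n \<Longrightarrow> i < n \<Longrightarrow>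
  (A *\<^sub>v x) $ i = (\<Sum>j<n. A $$ (i,j) * x $ j)"
  by (auto simp: scalar_prod_def atLeast0LessThan intro!: sum.cong)

lemma mat_adjoint_carrier: "A \<in> carrier_mat n n \<Longrightarrow> mat_adjoint A \<in> carrier_mat n n"
  unfolding mat_adjoint_def by (auto simp: mat_of_rows_def)

lemma mat_adjoint_index: "A \<in> carrier_mat n n \<Longrightarrow> i < n \<Longrightarrow> j < n \<Longrightarrow> mat_adjoint A $$ (i,j) = cnj (A $$ (j,i))"
  unfolding mat_adjoint_def by (auto simp: mat_of_rows_def)

lemma vinner_adjoint: assumes A: "A \<in> carrier_mat n n" and x: "x \<in> carrier_vec n" and y: "y \<in> carrier_vec n"
  shows "vinner (A *\<^sub>v x) y = vinner x (mat_adjoint A *\<^sub>v y)"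
proof -
  have "vinner (A *\<^sub>v x) y = (\<Sum>i<n. (\<Sum>j<n. A $$ (i,j) * x $ j) * cnj (y $ i))"
    unfolding vinner_def using A x by (auto simp: index_mult_mat_vec_sum[OF A x] simp del: index_mult_mat_vec)
  also have "\<dots> = (\<Sum>i<n. \<Sum>j<n. A $$ (i,j) * x $ j * cnj (y $ i))"
    by (simp add: sum_distrib_right)
  also have "\<dots> = (\<Sum>j<n. \<Sum>i<n. A $$ (i,j) * x $ j * cnj (y $ i))"
    by (rule sum.swap)
  also have "\<dots> = (\<Sum>j<n. x $ j * cnj (\<Sum>i<n. mat_adjoint A $$ (j,i) * y $ i))"
    using A by (auto simp: sum_distrib_left mat_adjoint_index intro!: sum.cong)
  also have "\<dots> = vinner x (mat_adjoint A *\<^sub>v y)"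
    unfolding vinner_def using A x y mat_adjoint_carrier[OF A] by (auto simp: index_mult_mat_vec_sum[OF mat_adjoint_carrier[OF A] y] simp del: index_mult_mat_vec)
  finally show ?thesis .
qed

lemma norm_index_le_vnorm: "i < dim_vec x \<Longrightarrow> cmod (x $ i) \<le> vnorm x"
  unfolding vnorm_eq_L2_set by (rule member_le_L2_set) auto

lemma vnorm_le_sum_norm: "vnorm x \<le> (\<Sum>i<dim_vec x. cmod (x $ i))"
  unfolding vnorm_eq_L2_set by (rule L2_set_le_sum) auto

lemma vnorm_zero[simp]: "vnorm (0\<^sub>v n) = 0"
  unfolding vnorm_def by simp

lemma mat_vec_zero[simp]: "A \<in> carrier_mat n n \<Longrightarrow> A *\<^sub>v 0\<^sub>v n = 0\<^sub>v n"
  by (intro eq_vecI) auto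

lemma bdd_above_opnorm_set: assumes A: "A \<in> carrier_mat n n"
  shows "bdd_above {vnorm (A *\<^sub>v x) | x. x \<in> carrier_vec (dim_col A) \<and> vnorm x \<le> 1}"
proof (rule bdd_aboveI)
  fix r assume "r \<in> {vnorm (A *\<^sub>v x) | x. x \<in> carrier_vec (dim_col A) \<and> vnorm x \<le> 1}"
  then obtain x where x: "x \<in> carrier_vec n" "vnorm x \<le> 1" and r: "r = vnorm (A *\<^sub>v x)"
    using A by auto
  have "r \<le> (\<Sum>i<n. cmod ((A *\<^sub>v x) $ i))" unfolding r using vnorm_le_sum_norm[of "A *\<^sub>v x"] A by simp
  also have "\<dots> \<le> (\<Sum>i<n. \<Sum>j<n. cmod (A $$ (i,j)))"
  proof (rule sum_mono)
    fix i assume i: "i \<in> {..<n}"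
    have "cmod ((A *\<^sub>v x) $ i) = cmod (\<Sum>j<n. A $$ (i,j) * x $ j)"
      using index_mult_mat_vec_sum[OF A x(1)] i by simp
    also have "\<dots> \<le> (\<Sum>j<n. cmod (A $$ (i,j) * x $ j))" by (rule norm_sum)
    also have "\<dots> \<le> (\<Sum>j<n. cmod (A $$ (i,j)))"
    proof (rule sum_mono)
      fix j assume j: "j \<in> {..<n}"
      have "cmod (x $ j) \<le> 1" using norm_index_le_vnorm[of j x] x j by auto
      then show "cmod (A $$ (i,j) * x $ j) \<le> cmod (A $$ (i,j))"
        by (simp add: norm_mult mult_left_le)
    qed
    finally show "cmod ((A *\<^sub>v x) $ i) \<le> (\<Sum>j<n. cmod (A $$ (i,j)))" .
  qed
  finally show "r \<le> (\<Sum>i<n. \<Sum>j<n. cmod (A $$ (i,j)))" .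
qed

lemma opnorm_nonneg: assumes A: "A \<in> carrier_mat n n" shows "opnorm A \<ge> 0"
proof -
  have "vnorm (A *\<^sub>v 0\<^sub>v n) \<in> {vnorm (A *\<^sub>v x) | x. x \<in> carrier_vec (dim_col A) \<and> vnorm x \<le> 1}"
  proof -
    have "0\<^sub>v n \<in> carrier_vec (dim_col A) \<and> vnorm (0\<^sub>v n) \<le> 1" using A by simp
    then show ?thesis by blast
  qed
  moreover have "vnorm (A *\<^sub>v 0\<^sub>v n) = 0" using A by simp
  ultimately show ?thesis unfolding opnorm_def using bdd_above_opnorm_set[OF A]
    by (metis (no_types, lifting) cSup_upper)
qed

lemma vnorm_mult_mat_vec_le: assumes A: "A \<in> carrier_mat n n" and x: "x \<in> carrier_vec n"
  shows "vnorm (A *\<^sub>v x) \<le> opnorm A * vnorm x"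
proof (cases "x = 0\<^sub>v n")
  case True
  then show ?thesis using A opnorm_nonneg[OF A] by simp
next
  case False
  then have vx: "vnorm x > 0" using vnorm_eq_0_iff[OF x] vnorm_nonneg[of x] by auto
  define u where "u = complex_of_real (1 / vnorm x) \<cdot>\<^sub>v x"
  have u: "u \<in> carrier_vec n" unfolding u_def using x by simp
  have vu: "vnorm u = 1" unfolding u_def vnorm_smult using vx by (simp add: norm_divide)
  have Au: "A *\<^sub>v u = complex_of_real (1 / vnorm x) \<cdot>\<^sub>v (A *\<^sub>v x)"
    unfolding u_def by (rule mult_mat_vec[OF A x])
  have "vnorm (A *\<^sub>v u) \<in> {vnorm (A *\<^sub>v x) | x. x \<in> carrier_vec (dim_col A) \<and> vnorm x \<le> 1}"
    using A u vu by auto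
  then have "vnorm (A *\<^sub>v u) \<le> opnorm A" unfolding opnorm_def using bdd_above_opnorm_set[OF A]
    by (metis (no_types, lifting) cSup_upper)
  then have "vnorm (A *\<^sub>v x) / vnorm x \<le> opnorm A"
    unfolding Au vnorm_smult using vx by (simp add: norm_divide)
  then show ?thesis using vx by (simp add: divide_le_eq)
qed

lemma Re_vinner_add_real_smult: assumes u: "u \<in> carrier_vec n" and v: "v \<in> carrier_vec n"
  shows "Re (vinner (u + complex_of_real s \<cdot>\<^sub>v v) (u + complex_of_real s \<cdot>\<^sub>v v))
     = Re (vinner u u) + 2 * s * Re (vinner u v) + s^2 * Re (vinner v v)"
proof -
  have sv: "complex_of_real s \<cdot>\<^sub>v v \<in> carrier_vec n" using v by simp
  have "vinner (u + complex_of_real s \<cdot>\<^sub>v v) (u + complex_of_real s \<cdot>\<^sub>v v)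
     = vinner u u + complex_of_real s * vinner u v + complex_of_real s * vinner v u + complex_of_real s * complex_of_real s * vinner v v"
    using u v sv
    by (simp add: vinner_add_left[of _ n] vinner_add_right[of _ n] vinner_smult_left vinner_smult_right algebra_simps)
  moreover have "vinner v u = cnj (vinner u v)" using u v cnj_vinner[of v u] by simp
  ultimately show ?thesis by (simp add: power2_eq_square)
qed

lemma perturbation_le_imp_eq_0:
  fixes N M c s :: real
  assumes "0 \<le> N" and "0 \<le> M" and "0 < s" and "s * c^2 \<le> 1"
    and "2 * s * N + s^2 * M \<le> s^2 * c^2 * N"
  shows "N = 0"
proof -
  have "2 * s * N \<le> s^2 * c^2 * N" using assms(2,3,5) by (smt (verit) mult_nonneg_nonneg zero_le_power2)
  then have "2 * N \<le> s * c^2 * N" using assms(3) by (simp add: power2_eq_square mult.assoc)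
  also have "\<dots> \<le> N" using assms(1,4) mult_right_mono[of "s * c^2" 1 N] by simp
  finally show ?thesis using assms(1) by simp
qed

lemma Re_vinner_adjoint_residual:
  assumes T: "T \<in> carrier_mat n n" and x: "x \<in> carrier_vec n"
    and g: "g = mat_adjoint T *\<^sub>v (T *\<^sub>v x) - complex_of_real a \<cdot>\<^sub>v x"
  shows "Re (vinner (T *\<^sub>v x) (T *\<^sub>v g)) - a * Re (vinner x g) = Re (vinner g g)"
proof -
  have TH: "mat_adjoint T \<in> carrier_mat n n" using mat_adjoint_carrier[OF T] .
  have gc: "g \<in> carrier_vec n" and Tx: "T *\<^sub>v x \<in> carrier_vec n" unfolding g using T TH x by auto
  have "vinner (T *\<^sub>v x) (T *\<^sub>v g) = cnj (vinner (T *\<^sub>v g) (T *\<^sub>v x))"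
    using cnj_vinner[of "T *\<^sub>v x" "T *\<^sub>v g"] T x gc by simp
  also have "vinner (T *\<^sub>v g) (T *\<^sub>v x) = vinner g (mat_adjoint T *\<^sub>v (T *\<^sub>v x))"
    by (rule vinner_adjoint[OF T gc Tx])
  also have "cnj \<dots> = vinner (mat_adjoint T *\<^sub>v (T *\<^sub>v x)) g"
    using cnj_vinner[of "mat_adjoint T *\<^sub>v (T *\<^sub>v x)" g] TH Tx gc by simp
  finally have "vinner (T *\<^sub>v x) (T *\<^sub>v g) = vinner (mat_adjoint T *\<^sub>v (T *\<^sub>v x)) g" .
  moreover have "vinner g g = vinner (mat_adjoint T *\<^sub>v (T *\<^sub>v x)) g - complex_of_real a * vinner x g"
    using TH Tx x gc by (subst (1) g) (simp add: vinner_minus_left[of _ n] vinner_smult_left)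
  ultimately show ?thesis by simp
qed

text \<open>If \<open>\<parallel>T\<parallel> \<le> c\<close> then \<open>c\<^sup>2 - T\<^sup>*T\<close> is positive semidefinite, so its quadratic form vanishes
  at \<open>x\<close> only if \<open>(c\<^sup>2 - T\<^sup>*T) x = 0\<close>; this is seen by testing the norm bound at \<open>x + s g\<close>
  for the residual \<open>g = T\<^sup>*T x - c\<^sup>2 x\<close> and a small \<open>s > 0\<close>.\<close>

lemma norm_attaining_imp_eigenvector:
  assumes T: "T \<in> carrier_mat n n"
    and bound: "\<And>y. y \<in> carrier_vec n \<Longrightarrow> vnorm (T *\<^sub>v y) \<le> c * vnorm y"
    and x: "x \<in> carrier_vec n" and eq: "vnorm (T *\<^sub>v x) = c * vnorm x"
  shows "mat_adjoint T *\<^sub>v (T *\<^sub>v x) = complex_of_real (c^2) \<cdot>\<^sub>v x"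
proof -
  define g where "g = mat_adjoint T *\<^sub>v (T *\<^sub>v x) - complex_of_real (c^2) \<cdot>\<^sub>v x"
  have g: "g \<in> carrier_vec n" unfolding g_def using T mat_adjoint_carrier[OF T] x by simp
  have Tx: "T *\<^sub>v x \<in> carrier_vec n" and Tg: "T *\<^sub>v g \<in> carrier_vec n" using T x g by auto
  define s where "s = 1 / (c^2 + 1)"
  have "c^2 + 1 > 0" by (smt (verit) zero_le_power2)
  then have s0: "s > 0" and sc: "s * c^2 \<le> 1" unfolding s_def by (simp_all add: divide_le_eq)
  define y where "y = x + complex_of_real s \<cdot>\<^sub>v g"
  have y: "y \<in> carrier_vec n" unfolding y_def using x g by simp
  have Ty: "T *\<^sub>v y = T *\<^sub>v x + complex_of_real s \<cdot>\<^sub>v (T *\<^sub>v g)"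
    unfolding y_def using T x g by (simp add: mult_add_distrib_mat_vec[OF T] mult_mat_vec[OF T])
  have "vnorm (T *\<^sub>v y) ^ 2 \<le> (c * vnorm y) ^ 2"
    using bound[OF y] vnorm_nonneg by (simp add: power_mono)
  then have ineq: "Re (vinner (T *\<^sub>v y) (T *\<^sub>v y)) \<le> c^2 * Re (vinner y y)"
    by (simp add: vnorm_square power_mult_distrib)
  have e1: "Re (vinner (T *\<^sub>v y) (T *\<^sub>v y)) = Re (vinner (T *\<^sub>v x) (T *\<^sub>v x))
      + 2 * s * Re (vinner (T *\<^sub>v x) (T *\<^sub>v g)) + s^2 * Re (vinner (T *\<^sub>v g) (T *\<^sub>v g))"
    unfolding Ty by (rule Re_vinner_add_real_smult[OF Tx Tg])
  have e2: "Re (vinner y y) = Re (vinner x x) + 2 * s * Re (vinner x g) + s^2 * Re (vinner g g)"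
    unfolding y_def by (rule Re_vinner_add_real_smult[OF x g])
  have e3: "Re (vinner (T *\<^sub>v x) (T *\<^sub>v x)) = c^2 * Re (vinner x x)"
    using eq by (simp add: vnorm_square[symmetric] power_mult_distrib)
  have "2 * s * Re (vinner g g) + s^2 * Re (vinner (T *\<^sub>v g) (T *\<^sub>v g)) \<le> s^2 * c^2 * Re (vinner g g)"
    using ineq e1 e2 e3 Re_vinner_adjoint_residual[OF T x g_def] by (simp add: algebra_simps)
  moreover have "0 \<le> Re (vinner g g)" and "0 \<le> Re (vinner (T *\<^sub>v g) (T *\<^sub>v g))"
    by (simp_all flip: vnorm_square)
  ultimately have "Re (vinner g g) = 0" using perturbation_le_imp_eq_0 s0 sc by blast
  then have "g = 0\<^sub>v n"
    using vinner_self_eq_0_iff[OF g] vnorm_square_vinner[of g] vnorm_square[of g] by (metis of_real_0)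
  show ?thesis
  proof (rule eq_vecI)
    fix i assume "i < dim_vec (complex_of_real (c^2) \<cdot>\<^sub>v x)"
    then have i: "i < n" using x by simp
    have "g $ i = 0" using \<open>g = 0\<^sub>v n\<close> i by simp
    then show "(mat_adjoint T *\<^sub>v (T *\<^sub>v x)) $ i = (complex_of_real (c^2) \<cdot>\<^sub>v x) $ i"
      unfolding g_def using i T mat_adjoint_carrier[OF T] x by simp
  qed (use T mat_adjoint_carrier[OF T] x in simp)
qed

section \<open>Orthonormal lists\<close>

definition orthonormal_list :: "nat \<Rightarrow> complex Matrix.vec list \<Rightarrow> bool" where
  "orthonormal_list n vs \<longleftrightarrow> set vs \<subseteq> carrier_vec n \<and>
     (\<forall>i<length vs. \<forall>j<length vs. vinner (vs!i) (vs!j) = (if i = j then 1 else 0))"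

abbreviation cspan :: "nat \<Rightarrow> complex Matrix.vec set \<Rightarrow> complex Matrix.vec set" where
  "cspan n S \<equiv> LinearCombinations.module.span class_ring (module_vec TYPE(complex) n) S"

abbreviation clindep :: "nat \<Rightarrow> complex Matrix.vec set \<Rightarrow> bool" where
  "clindep n S \<equiv> module.lin_dep class_ring (module_vec TYPE(complex) n) S"

lemma orthonormal_list_distinct: assumes "orthonormal_list n vs" shows "distinct vs"
proof -
  { fix i j assume i: "i < length vs" and j: "j < length vs" and ij: "i \<noteq> j" and eq: "vs!i = vs!j"
    have "vinner (vs!i) (vs!j) = 0" using assms i j ij unfolding orthonormal_list_def by auto
    moreover have "vinner (vs!i) (vs!i) = 1" using assms i unfolding orthonormal_list_def by auto
    ultimately have False using eq by simp }
  then show ?thesis by (auto simp: distinct_conv_nth)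
qed

lemma orthonormal_list_corthogonal: assumes "orthonormal_list n vs" shows "corthogonal vs"
proof (intro corthogonalI)
  fix i j assume i: "i < length vs" and j: "j < length vs"
  have c: "vs!i \<in> carrier_vec n" "vs!j \<in> carrier_vec n" using assms i j unfolding orthonormal_list_def by auto
  show "(vs ! i \<bullet>c vs ! j = 0) = (i \<noteq> j)"
    using assms i j unfolding orthonormal_list_def cscalar_prod_eq_vinner[OF c] by auto
qed

lemma orthonormal_list_lin_indpt: assumes on: "orthonormal_list n vs" shows "\<not> clindep n (set vs)"
proof -
  interpret vec_space "TYPE(complex)" n .
  have C: "set vs \<subseteq> carrier_vec n" using on unfolding orthonormal_list_def by auto
  have dist: "distinct vs" using orthonormal_list_distinct[OF on] .
  show ?thesis
  proof (rule finite_lin_indpt2)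
    fix a assume lc: "lincomb a (set vs) = 0\<^sub>v n"
    show "\<forall>v\<in>set vs. a v = 0"
    proof
      fix v assume v: "v \<in> set vs"
      then obtain j where j: "j < length vs" and vj: "v = vs!j" by (auto simp: in_set_conv_nth)
      have vc: "v \<in> carrier_vec n" using v C by auto
      have f: "(\<lambda>u. a u \<cdot>\<^sub>v u) \<in> set vs \<rightarrow> carrier_vec n" using C by auto
      have "0 = lincomb a (set vs) \<bullet> conjugate v" using lc vc by simp
      also have "\<dots> = (\<Sum>u\<in>set vs. (a u \<cdot>\<^sub>v u) \<bullet> conjugate v)"
        unfolding lincomb_def using finsum_scalar_prod_sum[OF f, of "conjugate v"] vc by simp
      also have "\<dots> = (\<Sum>u\<in>set vs. a u * vinner u v)"
      proof (rule sum.cong[OF refl])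
        fix u assume "u \<in> set vs"
        then have uc: "u \<in> carrier_vec n" using C by auto
        show "(a u \<cdot>\<^sub>v u) \<bullet> conjugate v = a u * vinner u v"
          using cscalar_prod_eq_vinner[OF uc vc] uc vc by simp
      qed
      also have "\<dots> = a v * vinner v v"
      proof (rule sum.remove[OF finite_set v, THEN trans])
        have "(\<Sum>u\<in>set vs - {v}. a u * vinner u v) = 0"
        proof (rule sum.neutral, rule ballI)
          fix u assume u: "u \<in> set vs - {v}"
          then obtain i where i: "i < length vs" and ui: "u = vs!i" by (auto simp: in_set_conv_nth)
          have "i \<noteq> j" using u ui vj by auto
          then show "a u * vinner u v = 0" using on i j ui vj unfolding orthonormal_list_def by auto
        qed
        then show "a v * vinner v v + (\<Sum>u\<in>set vs - {v}. a u * vinner u v) = a v * vinner v v" by simp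
      qed
      also have "vinner v v = 1" using on j vj unfolding orthonormal_list_def by auto
      finally show "a v = 0" by simp
    qed
  qed (use C in auto)
qed

lemma orthonormal_list_length_le: assumes on: "orthonormal_list n vs" shows "length vs \<le> n"
proof -
  interpret vec_space "TYPE(complex)" n .
  have C: "set vs \<subseteq> carrier_vec n" using on unfolding orthonormal_list_def by auto
  have "card (set vs) \<le> dim" using li_le_dim(2)[OF fin_dim _ orthonormal_list_lin_indpt[OF on]] C by auto
  then show ?thesis using distinct_card[OF orthonormal_list_distinct[OF on]] dim_is_n by simp
qed

lemma orthonormal_list_snoc: assumes on: "orthonormal_list n us" and w: "w \<in> carrier_vec n" and ww: "vinner w w = 1"
  and perp: "\<And>i. i < length us \<Longrightarrow> vinner w (us!i) = 0"
  shows "orthonormal_list n (us @ [w])"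
proof -
  have C: "set us \<subseteq> carrier_vec n" using on unfolding orthonormal_list_def by auto
  have perp': "vinner (us!i) w = 0" if i: "i < length us" for i
  proof -
    have "us!i \<in> carrier_vec n" using C i by auto
    then have "vinner (us!i) w = cnj (vinner w (us!i))" using cnj_vinner[of "us!i" w] w by simp
    then show ?thesis using perp[OF i] by simp
  qed
  show ?thesis unfolding orthonormal_list_def
  proof (intro conjI allI impI)
    show "set (us @ [w]) \<subseteq> carrier_vec n" using C w by auto
  next
    fix i j assume i: "i < length (us @ [w])" and j: "j < length (us @ [w])"
    show "vinner ((us @ [w]) ! i) ((us @ [w]) ! j) = (if i = j then 1 else 0)"
    proof (cases "i < length us"; cases "j < length us")
      assume "i < length us" "j < length us" then show ?thesis using on unfolding orthonormal_list_def by (simp add: nth_append)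
    next
      assume a: "i < length us" "\<not> j < length us"
      then have "j = length us" using j by simp
      then show ?thesis using a perp' by (simp add: nth_append)
    next
      assume a: "\<not> i < length us" "j < length us"
      then have "i = length us" using i by simp
      then show ?thesis using a perp by (simp add: nth_append)
    next
      assume a: "\<not> i < length us" "\<not> j < length us"
      then have "i = length us" "j = length us" using i j by auto
      then show ?thesis using ww by (simp add: nth_append)
    qed
  qed
qed

lemma orthonormal_list_extend_step:
  assumes on: "orthonormal_list n us" and v: "v \<in> carrier_vec n" and vsp: "v \<notin> cspan n (set us)"
  obtains w where "orthonormal_list n (us @ [w])" and "w \<in> cspan n (insert v (set us))"
proof -
  interpret cof_vec_space n "TYPE(complex)" .
  have U: "set us \<subseteq> carrier_vec n" using on unfolding orthonormal_list_def by auto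
  have dist: "distinct us" using orthonormal_list_distinct[OF on] .
  have corth: "corthogonal us" using orthonormal_list_corthogonal[OF on] .
  define w where "w = adjuster n v us + v"
  have wc: "w \<in> carrier_vec n" unfolding w_def using v U dist by simp
  have w0: "w \<noteq> 0\<^sub>v n" unfolding w_def by (rule adjust_nonzero[OF U dist v vsp])
  have wsp: "w \<in> span (insert v (set us))" unfolding w_def by (rule adjust_in_span[OF v U dist])
  have wperp: "vinner w (us!i) = 0" if i: "i < length us" for i
  proof -
    have "us!i \<in> carrier_vec n" using U i by auto
    then show ?thesis using adjust_zero[OF U corth v i] cscalar_prod_eq_vinner[OF wc] unfolding w_def by simp
  qed
  have nw: "vnorm w > 0" using vnorm_eq_0_iff[OF wc] vnorm_nonneg[of w] w0 by auto
  define w' where "w' = complex_of_real (1 / vnorm w) \<cdot>\<^sub>v w"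
  have w'c: "w' \<in> carrier_vec n" unfolding w'_def using wc by simp
  have "w' \<in> span (insert v (set us))" unfolding w'_def using U v by (intro smult_in_span[OF _ wsp]) auto
  moreover have "vinner w' w' = 1"
  proof -
    have "vinner w' w' = complex_of_real (1 / vnorm w) * complex_of_real (1 / vnorm w) * vinner w w"
      unfolding w'_def using wc by (simp add: vinner_smult_left vinner_smult_right)
    also have "vinner w w = complex_of_real (vnorm w ^ 2)" using vnorm_square_vinner[of w] by simp
    finally show ?thesis using nw by (simp add: power2_eq_square)
  qed
  moreover have "vinner w' (us!i) = 0" if "i < length us" for i
    unfolding w'_def using wperp[OF that] by (simp add: vinner_smult_left)
  ultimately show ?thesis using that orthonormal_list_snoc[OF on w'c] by blast
qed

lemma orthonormal_list_extend:
  assumes S: "S \<subseteq> carrier_vec n"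
    and cl: "\<And>T. finite T \<Longrightarrow> T \<subseteq> S \<Longrightarrow> cspan n T \<subseteq> S"
    and on: "orthonormal_list n us" and us: "set us \<subseteq> S"
  shows "\<exists>ws. orthonormal_list n (us @ ws) \<and> set ws \<subseteq> S \<and> S \<subseteq> cspan n (set (us @ ws))"
  using on us
proof (induction "n - length us" arbitrary: us rule: less_induct)
  case less
  show ?case
  proof (cases "S \<subseteq> cspan n (set us)")
    case True
    then show ?thesis using less.prems by (intro exI[of _ "[]"]) auto
  next
    case False
    then obtain v where vS: "v \<in> S" and vsp: "v \<notin> cspan n (set us)" by auto
    obtain w where on': "orthonormal_list n (us @ [w])" and wsp: "w \<in> cspan n (insert v (set us))"
      using orthonormal_list_extend_step[OF less.prems(1) _ vsp] vS S by blast
    have wS: "w \<in> S" using cl[of "insert v (set us)"] vS less.prems(2) wsp by auto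
    have "n - length (us @ [w]) < n - length us" using orthonormal_list_length_le[OF on'] by simp
    from less.hyps[OF this on'] less.prems(2) wS obtain ws where
      ws: "orthonormal_list n ((us @ [w]) @ ws)" "set ws \<subseteq> S" "S \<subseteq> cspan n (set ((us @ [w]) @ ws))"
      by auto
    show ?thesis using ws wS by (intro exI[of _ "w # ws"]) auto
  qed
qed

lemma orthonormal_list_complete: assumes on: "orthonormal_list n us" shows "\<exists>ws. orthonormal_list n (us @ ws) \<and> length (us @ ws) = n"
proof -
  interpret vec_space "TYPE(complex)" n .
  have U: "set us \<subseteq> carrier_vec n" using on unfolding orthonormal_list_def by auto
  obtain ws where ws: "orthonormal_list n (us @ ws)" "carrier_vec n \<subseteq> span (set (us @ ws))"
    using orthonormal_list_extend[of "carrier_vec n" n us] on U span_is_subset2 by auto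
  have C: "set (us @ ws) \<subseteq> carrier_vec n" using ws(1) unfolding orthonormal_list_def by auto
  have "span (set (us @ ws)) = carrier_vec n" using ws(2) span_is_subset2[OF C] by auto
  then have "basis (set (us @ ws))" unfolding basis_def using orthonormal_list_lin_indpt[OF ws(1)] C by auto
  then have "dim = card (set (us @ ws))" by (intro dim_basis) auto
  then show ?thesis using ws(1) distinct_card[OF orthonormal_list_distinct[OF ws(1)]] dim_is_n by auto
qed

lemma orthonormal_basis_exists:
  assumes S: "S \<subseteq> carrier_vec n"
    and cl: "\<And>T. finite T \<Longrightarrow> T \<subseteq> S \<Longrightarrow> cspan n T \<subseteq> S"
  shows "\<exists>qs. orthonormal_list n qs \<and> set qs \<subseteq> S \<and> S \<subseteq> cspan n (set qs)"
  using orthonormal_list_extend[OF S cl, of "[]"] by (auto simp: orthonormal_list_def)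

lemma cdim_eq_length_orthonormal_basis: assumes on: "orthonormal_list n qs" and qS: "set qs \<subseteq> S" and S: "S \<subseteq> carrier_vec n"
  and Ssp: "S \<subseteq> cspan n (set qs)"
  shows "cdim n S = length qs"
proof -
  interpret vec_space "TYPE(complex)" n .
  have C: "set qs \<subseteq> carrier_vec n" using on unfolding orthonormal_list_def by auto
  have "span S \<subseteq> span (span (set qs))" using span_is_monotone[OF Ssp] .
  also have "\<dots> = span (set qs)" using span_span[OF C] .
  finally have "span S = span (set qs)" using span_is_monotone[OF qS] by auto
  then have "cdim n S = vectorspace.dim class_ring (span_vs (set qs))" unfolding cdim_def by simp
  also have "\<dots> = card (set qs)"
  proof (rule dim_span[OF C])
    show "maximal (set qs) (\<lambda>T. T \<subseteq> set qs \<and> \<not> lin_dep T)"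
      unfolding maximal_def using orthonormal_list_lin_indpt[OF on] by auto
  qed simp
  also have "\<dots> = length qs" using distinct_card[OF orthonormal_list_distinct[OF on]] .
  finally show ?thesis .
qed

lemma orthonormal_list_spanning_length: assumes on: "orthonormal_list n qs" and sp: "carrier_vec n \<subseteq> cspan n (set qs)"
  shows "length qs = n"
proof -
  interpret vec_space "TYPE(complex)" n .
  have C: "set qs \<subseteq> carrier_vec n" using on unfolding orthonormal_list_def by auto
  have "span (set qs) = carrier_vec n" using sp span_is_subset2[OF C] by auto
  then have "basis (set qs)" unfolding basis_def using orthonormal_list_lin_indpt[OF on] C by auto
  then have "dim = card (set qs)" by (intro dim_basis) auto
  then show ?thesis using distinct_card[OF orthonormal_list_distinct[OF on]] dim_is_n by auto
qed

lemma span_subset_eigenspace: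
  assumes B: "B \<in> carrier_mat n n" and T: "T \<subseteq> {x \<in> carrier_vec n. B *\<^sub>v x = \<mu> \<cdot>\<^sub>v x}"
  shows "cspan n T \<subseteq> {x \<in> carrier_vec n. B *\<^sub>v x = \<mu> \<cdot>\<^sub>v x}"
proof -
  interpret vec_space "TYPE(complex)" n .
  have sub: "LinearCombinations.submodule class_ring {x \<in> carrier_vec n. B *\<^sub>v x = \<mu> \<cdot>\<^sub>v x} V"
  proof (rule LinearCombinations.submodule.intro)
    show "Module.module class_ring V" by unfold_locales
  next
    show "{x \<in> carrier_vec n. B *\<^sub>v x = \<mu> \<cdot>\<^sub>v x} \<subseteq> carrier V" by auto
  next
    fix v w assume v: "v \<in> {x \<in> carrier_vec n. B *\<^sub>v x = \<mu> \<cdot>\<^sub>v x}" and w: "w \<in> {x \<in> carrier_vec n. B *\<^sub>v x = \<mu> \<cdot>\<^sub>v x}"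
    then show "v \<oplus>\<^bsub>V\<^esub> w \<in> {x \<in> carrier_vec n. B *\<^sub>v x = \<mu> \<cdot>\<^sub>v x}"
      using B by (auto simp: mult_add_distrib_mat_vec[OF B] smult_add_distrib_vec[of _ n])
  next
    show "\<zero>\<^bsub>V\<^esub> \<in> {x \<in> carrier_vec n. B *\<^sub>v x = \<mu> \<cdot>\<^sub>v x}" using B by auto
  next
    fix a :: complex and v assume v: "v \<in> {x \<in> carrier_vec n. B *\<^sub>v x = \<mu> \<cdot>\<^sub>v x}"
    then show "a \<odot>\<^bsub>V\<^esub> v \<in> {x \<in> carrier_vec n. B *\<^sub>v x = \<mu> \<cdot>\<^sub>v x}"
      using B by (auto simp: mult_mat_vec[OF B] smult_smult_assoc mult.commute)
  qed
  show ?thesis by (rule span_is_subset[OF T sub])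
qed

lemma orthonormal_list_map_scaled:
  fixes T :: "complex mat" and c :: real
  assumes T: "T \<in> carrier_mat n n" and c: "c > 0" and qs: "orthonormal_list n qs"
    and eigen: "\<And>q. q \<in> set qs \<Longrightarrow> mat_adjoint T *\<^sub>v (T *\<^sub>v q) = complex_of_real (c^2) \<cdot>\<^sub>v q"
  shows "orthonormal_list n (map (\<lambda>q. complex_of_real (1/c) \<cdot>\<^sub>v (T *\<^sub>v q)) qs)"
  unfolding orthonormal_list_def
proof (intro conjI allI impI)
  have C: "set qs \<subseteq> carrier_vec n" using qs unfolding orthonormal_list_def by auto
  then show "set (map (\<lambda>q. complex_of_real (1/c) \<cdot>\<^sub>v (T *\<^sub>v q)) qs) \<subseteq> carrier_vec n" using T by auto
  fix i j assume "i < length (map (\<lambda>q. complex_of_real (1/c) \<cdot>\<^sub>v (T *\<^sub>v q)) qs)"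
    and "j < length (map (\<lambda>q. complex_of_real (1/c) \<cdot>\<^sub>v (T *\<^sub>v q)) qs)"
  then have i: "i < length qs" and j: "j < length qs" by auto
  have qi: "qs ! i \<in> carrier_vec n" and qj: "qs ! j \<in> carrier_vec n" using C i j by auto
  have "vinner (T *\<^sub>v qs ! i) (T *\<^sub>v qs ! j) = complex_of_real (c^2) * vinner (qs ! i) (qs ! j)"
    using vinner_adjoint[OF T qi, of "T *\<^sub>v qs ! j"] eigen[of "qs ! j"] T qi qj j
    by (simp add: vinner_smult_right)
  then show "vinner (map (\<lambda>q. complex_of_real (1/c) \<cdot>\<^sub>v (T *\<^sub>v q)) qs ! i)
                     (map (\<lambda>q. complex_of_real (1/c) \<cdot>\<^sub>v (T *\<^sub>v q)) qs ! j) = (if i = j then 1 else 0)"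
    using qs i j c T qj unfolding orthonormal_list_def
    by (simp add: vinner_smult_left vinner_smult_right power2_eq_square)
qed

lemma mat_adjoint_adjoint: fixes A :: "complex mat" assumes A: "A \<in> carrier_mat n n" shows "mat_adjoint (mat_adjoint A) = A"
proof (rule eq_matI)
  fix i j assume "i < dim_row A" "j < dim_col A"
  then have i: "i < n" and j: "j < n" using A by auto
  show "mat_adjoint (mat_adjoint A) $$ (i, j) = A $$ (i, j)"
    using mat_adjoint_index[OF mat_adjoint_carrier[OF A] i j] mat_adjoint_index[OF A j i] by simp
qed (use mat_adjoint_carrier[OF mat_adjoint_carrier[OF A]] A in auto)

lemma mat_adjoint_mult_index: assumes U: "U \<in> carrier_mat n n" and M: "M \<in> carrier_mat n n"
  and i: "i < n" and j: "j < n"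
  shows "(mat_adjoint U * M) $$ (i,j) = vinner (col M j) (col U i)"
proof -
  have "(mat_adjoint U * M) $$ (i,j) = (\<Sum>k<n. mat_adjoint U $$ (i,k) * M $$ (k,j))"
    using U M i j mat_adjoint_carrier[OF U] by (simp add: scalar_prod_def atLeast0LessThan)
  also have "\<dots> = (\<Sum>k<n. col M j $ k * cnj (col U i $ k))"
    using U M i j by (auto simp: mat_adjoint_index intro!: sum.cong)
  finally show ?thesis unfolding vinner_def using M by simp
qed

lemma unitary_mat_of_cols_orthonormal: assumes on: "orthonormal_list n L" and len: "length L = n"
  shows "unitary_mat n (mat_of_cols n L)" "unitary_mat n (mat_adjoint (mat_of_cols n L))"
proof -
  define Q where "Q = mat_of_cols n L"
  have Q: "Q \<in> carrier_mat n n" unfolding Q_def using len by auto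
  have C: "set L \<subseteq> carrier_vec n" using on unfolding orthonormal_list_def by auto
  have colQ: "col Q j = L ! j" if "j < n" for j
    unfolding Q_def using that len C by (intro col_mat_of_cols) auto
  have QQ: "mat_adjoint Q * Q = 1\<^sub>m n"
  proof (rule eq_matI)
    fix i j assume i: "i < dim_row (1\<^sub>m n)" and j: "j < dim_col (1\<^sub>m n)"
    then have i': "i < n" and j': "j < n" by auto
    have "(mat_adjoint Q * Q) $$ (i,j) = vinner (L!j) (L!i)"
      using mat_adjoint_mult_index[OF Q Q i' j'] colQ i' j' by simp
    also have "\<dots> = (if j = i then 1 else 0)" using on i' j' len unfolding orthonormal_list_def by auto
    finally show "(mat_adjoint Q * Q) $$ (i,j) = 1\<^sub>m n $$ (i,j)" using i' j' by auto
  qed (use Q mat_adjoint_carrier[OF Q] in auto)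
  have QQ': "Q * mat_adjoint Q = 1\<^sub>m n"
    by (rule mat_mult_left_right_inverse[OF mat_adjoint_carrier[OF Q] Q QQ])
  show "unitary_mat n (mat_of_cols n L)" unfolding Q_def[symmetric] unitary_mat_def
    using Q QQ QQ' by auto
  show "unitary_mat n (mat_adjoint (mat_of_cols n L))" unfolding Q_def[symmetric] unitary_mat_def
    using mat_adjoint_carrier[OF Q] QQ QQ' mat_adjoint_adjoint[OF Q] by auto
qed

lemma mat_adjoint_one: "mat_adjoint (1\<^sub>m n :: complex mat) = 1\<^sub>m n"
proof (rule eq_matI)
  fix i j assume "i < dim_row (1\<^sub>m n :: complex mat)" "j < dim_col (1\<^sub>m n :: complex mat)"
  then have i: "i < n" and j: "j < n" by auto
  show "mat_adjoint (1\<^sub>m n :: complex mat) $$ (i,j) = 1\<^sub>m n $$ (i,j)"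
    using mat_adjoint_index[of "1\<^sub>m n" n i j] i j by auto
qed (use mat_adjoint_carrier[of "1\<^sub>m n :: complex mat" n] in auto)

lemma unitary_mat_one: "unitary_mat n (1\<^sub>m n)"
  unfolding unitary_mat_def mat_adjoint_one by simp

lemma unitary_change_of_basis:
  assumes U: "unitary_mat n U" and Q: "unitary_mat n Q" and M: "M \<in> carrier_mat n n"
    and B: "mat_adjoint U * M * Q = B"
  shows "M = U * B * mat_adjoint Q"
proof -
  have Uc: "U \<in> carrier_mat n n" and Qc: "Q \<in> carrier_mat n n" using U Q unfolding unitary_mat_def by auto
  have "U * (mat_adjoint U * M * Q) * mat_adjoint Q = (U * mat_adjoint U) * M * (Q * mat_adjoint Q)"
    using Uc Qc mat_adjoint_carrier[OF Uc] mat_adjoint_carrier[OF Qc] M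
    by (simp add: assoc_mult_mat[of _ n n _ n _ n])
  also have "\<dots> = M" using U Q M unfolding unitary_mat_def by simp
  finally show ?thesis unfolding B by simp
qed

lemma mult_smult_one_mult:
  fixes U V :: "complex mat"
  assumes "U \<in> carrier_mat n n" and "V \<in> carrier_mat n n"
  shows "U * (a \<cdot>\<^sub>m 1\<^sub>m n) * V = a \<cdot>\<^sub>m (U * V)"
proof -
  have "U * (a \<cdot>\<^sub>m 1\<^sub>m n) = a \<cdot>\<^sub>m U"
    using mult_smult_distrib[OF assms(1) one_carrier_mat, of a] assms(1) by simp
  then show ?thesis using mult_smult_assoc_mat[OF assms] by simp
qed

section \<open>The maximum modulus principle for matrix functions\<close>

lemma mat_analytic_on_entry_holomorphic: assumes "mat_analytic_on n F \<Omega>" "i < n" "j < n"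
  shows "(\<lambda>z. F z $$ (i,j)) holomorphic_on \<Omega>"
  using assms unfolding mat_analytic_on_def by (auto intro: analytic_imp_holomorphic)

lemma holomorphic_on_vinner: assumes F: "mat_analytic_on n F \<Omega>" and x: "x \<in> carrier_vec n" and y: "y \<in> carrier_vec n"
  shows "(\<lambda>z. vinner (F z *\<^sub>v x) y) holomorphic_on \<Omega>"
proof (rule holomorphic_transform)
  show "(\<lambda>z. \<Sum>i<n. (\<Sum>j<n. F z $$ (i,j) * x $ j) * cnj (y $ i)) holomorphic_on \<Omega>"
    using mat_analytic_on_entry_holomorphic[OF F] by (intro holomorphic_on_sum holomorphic_intros) auto
next
  fix z assume z: "z \<in> \<Omega>"
  then have Fz: "F z \<in> carrier_mat n n" using F unfolding mat_analytic_on_def by auto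
  show "(\<Sum>i<n. (\<Sum>j<n. F z $$ (i,j) * x $ j) * cnj (y $ i)) = vinner (F z *\<^sub>v x) y"
    unfolding vinner_def using Fz x by (auto simp: index_mult_mat_vec_sum[OF Fz x] simp del: index_mult_mat_vec)
qed

lemma eq_if_Re_vinner_eq_vnorm_square:
  assumes u: "u \<in> carrier_vec n" and a: "a \<in> carrier_vec n"
    and le: "vnorm u \<le> vnorm a" and eq: "Re (vinner u a) = vnorm a ^ 2"
  shows "u = a"
proof -
  have "Re (vinner (u + complex_of_real (-1) \<cdot>\<^sub>v a) (u + complex_of_real (-1) \<cdot>\<^sub>v a))
      = Re (vinner u u) + 2 * (-1) * Re (vinner u a) + (-1)^2 * Re (vinner a a)"
    by (rule Re_vinner_add_real_smult[OF u a])
  also have "\<dots> \<le> 0"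
    using eq power_mono[OF le vnorm_nonneg, of 2] by (simp flip: vnorm_square)
  finally have "vnorm (u + complex_of_real (-1) \<cdot>\<^sub>v a) = 0"
    using vnorm_nonneg by (simp flip: vnorm_square)
  then have diff: "u + complex_of_real (-1) \<cdot>\<^sub>v a = 0\<^sub>v n" using vnorm_eq_0_iff[of _ n] u a by simp
  show ?thesis
  proof (rule eq_vecI)
    fix i assume "i < dim_vec a"
    then have i: "i < n" using a by simp
    have "(u + complex_of_real (-1) \<cdot>\<^sub>v a) $ i = u $ i - a $ i" using i u a by simp
    then show "u $ i = a $ i" using diff i by simp
  qed (use u a in simp)
qed

lemma maximal_vec_constant:
  assumes op: "open \<Omega>" and co: "connected \<Omega>" and F: "mat_analytic_on n F \<Omega>" and z0: "z0 \<in> \<Omega>"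
    and bound: "\<And>z y. z \<in> \<Omega> \<Longrightarrow> y \<in> carrier_vec n \<Longrightarrow> vnorm (F z *\<^sub>v y) \<le> c * vnorm y"
    and c: "c \<ge> 0" and x: "x \<in> carrier_vec n" and eq: "vnorm (F z0 *\<^sub>v x) = c * vnorm x"
    and z: "z \<in> \<Omega>"
  shows "F z *\<^sub>v x = F z0 *\<^sub>v x"
proof -
  have Fc: "\<And>z. z \<in> \<Omega> \<Longrightarrow> F z \<in> carrier_mat n n" using F unfolding mat_analytic_on_def by auto
  define a where "a = F z0 *\<^sub>v x"
  have a: "a \<in> carrier_vec n" unfolding a_def using Fc[OF z0] x by simp
  define \<phi> where "\<phi> = (\<lambda>z. vinner (F z *\<^sub>v x) a)"
  have holo: "\<phi> holomorphic_on \<Omega>" unfolding \<phi>_def by (rule holomorphic_on_vinner[OF F x a])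
  have \<phi>0: "\<phi> z0 = complex_of_real ((c * vnorm x)^2)"
    unfolding \<phi>_def a_def[symmetric] using vnorm_square_vinner[of a] eq unfolding a_def by simp
  have le: "cmod (\<phi> w) \<le> cmod (\<phi> z0)" if w: "w \<in> \<Omega>" for w
  proof -
    have "cmod (\<phi> w) \<le> vnorm (F w *\<^sub>v x) * vnorm a"
      unfolding \<phi>_def using norm_vinner_le[of a "F w *\<^sub>v x"] Fc[OF w] a by simp
    also have "\<dots> \<le> (c * vnorm x) * (c * vnorm x)"
      using bound[OF w x] eq vnorm_nonneg[of a] vnorm_nonneg[of x] c unfolding a_def
      by (simp add: mult_right_mono)
    also have "\<dots> = cmod (\<phi> z0)" unfolding \<phi>0 norm_of_real abs_power2 by (simp add: power2_eq_square)
    finally show ?thesis .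
  qed
  have "\<phi> constant_on \<Omega>"
    by (rule maximum_modulus_principle[OF holo op co op subset_refl z0 le])
  then have "\<phi> z = \<phi> z0" unfolding constant_on_def using z z0 by metis
  then have "Re (vinner (F z *\<^sub>v x) a) = vnorm a ^ 2" using \<phi>0 eq unfolding \<phi>_def a_def by simp
  moreover have "vnorm (F z *\<^sub>v x) \<le> vnorm a" using bound[OF z x] eq unfolding a_def by simp
  ultimately show ?thesis
    using eq_if_Re_vinner_eq_vnorm_square[OF _ a] Fc[OF z] x unfolding a_def by simp
qed

lemma higher_deriv_sum:
  assumes "finite J" and "\<And>j. j \<in> J \<Longrightarrow> f j holomorphic_on S" and "open S" and "z \<in> S"
  shows "(deriv ^^ k) (\<lambda>w. \<Sum>j\<in>J. f j w) z = (\<Sum>j\<in>J. (deriv ^^ k) (f j) z)"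
  using assms(1,2)
proof (induction J rule: finite_induct)
  case empty
  then show ?case by (simp add: higher_deriv_const)
next
  case (insert a J)
  have "(deriv ^^ k) (\<lambda>w. \<Sum>j\<in>insert a J. f j w) z = (deriv ^^ k) (\<lambda>w. f a w + (\<Sum>j\<in>J. f j w)) z"
    using insert.hyps by simp
  also have "\<dots> = (deriv ^^ k) (f a) z + (deriv ^^ k) (\<lambda>w. \<Sum>j\<in>J. f j w) z"
    using insert.prems assms(3,4) by (intro higher_deriv_add holomorphic_on_sum) auto
  also have "(deriv ^^ k) (\<lambda>w. \<Sum>j\<in>J. f j w) z = (\<Sum>j\<in>J. (deriv ^^ k) (f j) z)"
    using insert by auto
  finally show ?case using insert.hyps by simp
qed

lemma mat_deriv_mult_vec_eq_0:
  assumes op: "open \<Omega>" and F: "mat_analytic_on n F \<Omega>" and z0: "z0 \<in> \<Omega>"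
    and x: "x \<in> carrier_vec n" and const: "\<And>z. z \<in> \<Omega> \<Longrightarrow> F z *\<^sub>v x = F z0 *\<^sub>v x" and k: "k \<ge> 1"
  shows "mat_deriv n k F z0 *\<^sub>v x = 0\<^sub>v n"
proof -
  have Fc: "\<And>z. z \<in> \<Omega> \<Longrightarrow> F z \<in> carrier_mat n n" using F unfolding mat_analytic_on_def by auto
  have D: "mat_deriv n k F z0 \<in> carrier_mat n n" unfolding mat_deriv_def by simp
  show ?thesis
  proof (rule eq_vecI)
    fix i assume "i < dim_vec (0\<^sub>v n :: complex Matrix.vec)"
    then have i: "i < n" by simp
    have "(mat_deriv n k F z0 *\<^sub>v x) $ i = (\<Sum>j<n. (deriv ^^ k) (\<lambda>w. F w $$ (i,j)) z0 * x $ j)"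
      using index_mult_mat_vec_sum[OF D x i] i unfolding mat_deriv_def by simp
    also have "\<dots> = (\<Sum>j<n. (deriv ^^ k) (\<lambda>w. x $ j * F w $$ (i,j)) z0)"
    proof (intro sum.cong refl)
      fix j assume "j \<in> {..<n}"
      then have j: "j < n" by simp
      show "(deriv ^^ k) (\<lambda>w. F w $$ (i,j)) z0 * x $ j = (deriv ^^ k) (\<lambda>w. x $ j * F w $$ (i,j)) z0"
        using higher_deriv_cmult[OF mat_analytic_on_entry_holomorphic[OF F i j] z0 op, of k "x $ j"] by (simp add: mult.commute)
    qed
    also have "\<dots> = (deriv ^^ k) (\<lambda>w. \<Sum>j<n. x $ j * F w $$ (i,j)) z0"
      using mat_analytic_on_entry_holomorphic[OF F i] op z0 by (intro higher_deriv_sum[symmetric] holomorphic_intros) auto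
    also have "\<dots> = (deriv ^^ k) (\<lambda>w. (F z0 *\<^sub>v x) $ i) z0"
    proof (rule higher_deriv_cong_ev)
      have "\<forall>\<^sub>F w in nhds z0. w \<in> \<Omega>" using op z0 by (rule eventually_nhds_in_open)
      then show "\<forall>\<^sub>F w in nhds z0. (\<Sum>j<n. x $ j * F w $$ (i,j)) = (F z0 *\<^sub>v x) $ i"
      proof (rule eventually_mono)
        fix w assume w: "w \<in> \<Omega>"
        have "(\<Sum>j<n. x $ j * F w $$ (i,j)) = (F w *\<^sub>v x) $ i"
          using index_mult_mat_vec_sum[OF Fc[OF w] x i] by (simp add: mult.commute)
        then show "(\<Sum>j<n. x $ j * F w $$ (i,j)) = (F z0 *\<^sub>v x) $ i" using const[OF w] by simp
      qed
    qed simp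
    also have "\<dots> = 0" using k by (simp add: higher_deriv_const)
    finally show "(mat_deriv n k F z0 *\<^sub>v x) $ i = 0\<^sub>v n $ i" using i by simp
  qed (use D in simp)
qed

section \<open>Block decomposition by orthonormal bases\<close>

lemma four_block_full:
  fixes X :: "complex mat"
  assumes X: "X \<in> carrier_mat n n" and D: "D \<in> carrier_mat 0 0"
  shows "four_block_mat X (0\<^sub>m n 0) (0\<^sub>m 0 n) D = X"
  by (rule eq_matI) (use X D in auto)

lemma index_mat_adjoint_mult_mult_mat_of_cols:
  fixes M :: "complex mat"
  assumes M: "M \<in> carrier_mat n n"
    and us: "set us \<subseteq> carrier_vec n" "length us = n" and vs: "set vs \<subseteq> carrier_vec n" "length vs = n"
    and i: "i < n" and j: "j < n"
  shows "(mat_adjoint (mat_of_cols n vs) * M * mat_of_cols n us) $$ (i,j) = vinner (M *\<^sub>v us ! j) (vs ! i)"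
proof -
  define Q where "Q = mat_of_cols n us"
  define U where "U = mat_of_cols n vs"
  have Q: "Q \<in> carrier_mat n n" and U: "U \<in> carrier_mat n n" unfolding Q_def U_def using us vs by auto
  have "col Q j = us ! j"
    unfolding Q_def using us j nth_mem[of j us] by (intro col_mat_of_cols) auto
  then have "col (M * Q) j = M *\<^sub>v us ! j" using col_mult2[OF M Q j] by simp
  moreover have "col U i = vs ! i"
    unfolding U_def using vs i nth_mem[of i vs] by (intro col_mat_of_cols) auto
  moreover have "mat_adjoint U * M * Q = mat_adjoint U * (M * Q)"
    using mat_adjoint_carrier[OF U] M Q by simp
  ultimately show ?thesis
    using mat_adjoint_mult_index[OF U _ i j, of "M * Q"] M Q unfolding Q_def[symmetric] U_def[symmetric] by simp
qed

lemma adjoint_mult_mult_block_form: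
  fixes Fz A :: "complex mat" and c :: real
  assumes Fz: "Fz \<in> carrier_mat n n" and A: "A \<in> carrier_mat n n" and c: "c > 0"
    and onQ: "orthonormal_list n (qs @ rs)" and lenQ: "length (qs @ rs) = n"
    and onU: "orthonormal_list n (ws @ ts)" and lenU: "length (ws @ ts) = n"
    and ws: "ws = map (\<lambda>q. complex_of_real (1/c) \<cdot>\<^sub>v (A *\<^sub>v q)) qs"
    and same: "\<And>q. q \<in> set qs \<Longrightarrow> Fz *\<^sub>v q = A *\<^sub>v q"
    and eigA: "\<And>q. q \<in> set qs \<Longrightarrow> mat_adjoint A *\<^sub>v (A *\<^sub>v q) = complex_of_real (c^2) \<cdot>\<^sub>v q"
    and eigF: "\<And>q. q \<in> set qs \<Longrightarrow> mat_adjoint Fz *\<^sub>v (Fz *\<^sub>v q) = complex_of_real (c^2) \<cdot>\<^sub>v q"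
    and d: "d = length qs"
  shows "mat_adjoint (mat_of_cols n (ws @ ts)) * Fz * mat_of_cols n (qs @ rs)
    = four_block_mat (complex_of_real c \<cdot>\<^sub>m 1\<^sub>m d) (0\<^sub>m d (n - d)) (0\<^sub>m (n - d) d)
        (Matrix.mat (n - d) (n - d) (\<lambda>(i,j). vinner (Fz *\<^sub>v (rs!j)) (ts!i)))"
    (is "?L = ?B")
proof (rule eq_matI)
  have CQ: "set (qs @ rs) \<subseteq> carrier_vec n" using onQ unfolding orthonormal_list_def by auto
  have CU: "set (ws @ ts) \<subseteq> carrier_vec n" using onU unfolding orthonormal_list_def by auto
  have lenws: "length ws = d" using ws d by simp
  have dn: "d \<le> n" using lenQ d by simp
  have qc: "qs ! i \<in> carrier_vec n" if "i < d" for i using CQ that d by (auto simp: nth_append)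
  have wsi: "(ws @ ts) ! i = complex_of_real (1/c) \<cdot>\<^sub>v (A *\<^sub>v qs ! i)" if "i < d" for i
    using that ws d by (simp add: nth_append)
  have qsi: "(qs @ rs) ! i = qs ! i" if "i < d" for i using that d by (simp add: nth_append)
  have ipQ: "vinner ((qs @ rs) ! i) ((qs @ rs) ! j) = (if i = j then 1 else 0)" if "i < n" "j < n" for i j
    using onQ that lenQ unfolding orthonormal_list_def by auto
  have ipU: "vinner ((ws @ ts) ! i) ((ws @ ts) ! j) = (if i = j then 1 else 0)" if "i < n" "j < n" for i j
    using onU that lenU unfolding orthonormal_list_def by auto
  have B: "?B \<in> carrier_mat n n" using four_block_carrier_mat[of "complex_of_real c \<cdot>\<^sub>m 1\<^sub>m d" d d
      "Matrix.mat (n - d) (n - d) (\<lambda>(i,j). vinner (Fz *\<^sub>v (rs!j)) (ts!i))" "n - d" "n - d"] dn by simp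
  then show "dim_row ?L = dim_row ?B" "dim_col ?L = dim_col ?B"
    using lenQ lenU dn by (simp_all add: mat_adjoint_def)
  fix i j assume "i < dim_row ?B" "j < dim_col ?B"
  then have i: "i < n" and j: "j < n" using B by auto
  have "?L $$ (i,j) = vinner (Fz *\<^sub>v ((qs @ rs) ! j)) ((ws @ ts) ! i)"
    by (rule index_mat_adjoint_mult_mult_mat_of_cols[OF Fz CQ lenQ CU lenU i j])
  also have "\<dots> = ?B $$ (i,j)"
  proof (cases "i < d"; cases "j < d")
    assume id: "i < d" and jd: "j < d"
    have "vinner (Fz *\<^sub>v ((qs @ rs) ! j)) ((ws @ ts) ! i)
        = complex_of_real (1/c) * vinner (A *\<^sub>v qs ! j) (A *\<^sub>v qs ! i)"
      using wsi[OF id] qsi[OF jd] same[of "qs ! j"] jd d A qc[OF id] by (simp add: vinner_smult_right)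
    also have "vinner (A *\<^sub>v qs ! j) (A *\<^sub>v qs ! i) = vinner (qs ! j) (complex_of_real (c^2) \<cdot>\<^sub>v qs ! i)"
      using vinner_adjoint[OF A qc[OF jd], of "A *\<^sub>v qs ! i"] eigA[of "qs ! i"] A qc[OF id] id d by simp
    also have "\<dots> = complex_of_real (c^2) * (if j = i then 1 else 0)"
      using ipQ[of j i] qsi[OF id] qsi[OF jd] i j qc[OF id] qc[OF jd] by (simp add: vinner_smult_right)
    finally show ?thesis using id jd dn i j by (simp add: power2_eq_square)
  next
    assume id: "i < d" and jd: "\<not> j < d"
    have rj: "(qs @ rs) ! j \<in> carrier_vec n" using CQ nth_mem[of j "qs @ rs"] j lenQ by auto
    have "vinner (Fz *\<^sub>v ((qs @ rs) ! j)) ((ws @ ts) ! i)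
        = complex_of_real (1/c) * vinner (Fz *\<^sub>v ((qs @ rs) ! j)) (Fz *\<^sub>v qs ! i)"
      using wsi[OF id] same[of "qs ! i"] id d Fz A qc[OF id] rj by (simp add: vinner_smult_right)
    also have "vinner (Fz *\<^sub>v ((qs @ rs) ! j)) (Fz *\<^sub>v qs ! i) = vinner ((qs @ rs) ! j) (complex_of_real (c^2) \<cdot>\<^sub>v qs ! i)"
      using vinner_adjoint[OF Fz rj, of "Fz *\<^sub>v qs ! i"] eigF[of "qs ! i"] Fz qc[OF id] id d by simp
    also have "\<dots> = 0"
      using ipQ[of j i] qsi[OF id] i j id jd qc[OF id] rj by (simp add: vinner_smult_right)
    finally show ?thesis using id jd dn i j by simp
  next
    assume id: "\<not> i < d" and jd: "j < d"
    have ti: "(ws @ ts) ! i \<in> carrier_vec n" using CU nth_mem[of i "ws @ ts"] i lenU by auto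
    have wj: "(ws @ ts) ! j = complex_of_real (1/c) \<cdot>\<^sub>v (A *\<^sub>v qs ! j)" using wsi[OF jd] .
    have "A *\<^sub>v qs ! j = complex_of_real c \<cdot>\<^sub>v ((ws @ ts) ! j)"
      unfolding wj using c by (simp add: smult_smult_assoc)
    then have "vinner (Fz *\<^sub>v ((qs @ rs) ! j)) ((ws @ ts) ! i) = complex_of_real c * vinner ((ws @ ts) ! j) ((ws @ ts) ! i)"
      using qsi[OF jd] same[of "qs ! j"] jd d by (simp add: vinner_smult_left)
    also have "\<dots> = 0" using ipU[of j i] i j id jd by auto
    finally show ?thesis using id jd dn i j by simp
  next
    assume id: "\<not> i < d" and jd: "\<not> j < d"
    show ?thesis using id jd dn i j d lenws by (simp add: nth_append)
  qed
  finally show "?L $$ (i,j) = ?B $$ (i,j)" .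
qed

locale maximal_norm_at =
  fixes \<Omega> :: "complex set" and F :: "complex \<Rightarrow> complex mat" and n :: nat and z0 :: complex
  assumes open_domain: "open \<Omega>" and connected_domain: "connected \<Omega>"
    and analytic: "mat_analytic_on n F \<Omega>" and z0_in: "z0 \<in> \<Omega>"
    and opnorm_le: "\<forall>z\<in>\<Omega>. opnorm (F z) \<le> opnorm (F z0)"
begin

definition extremal_vecs :: "complex Matrix.vec set" where
  "extremal_vecs = {x \<in> carrier_vec n. vnorm (F z0 *\<^sub>v x) = opnorm (F z0) * vnorm x}"

lemma F_carrier: "z \<in> \<Omega> \<Longrightarrow> F z \<in> carrier_mat n n"
  using analytic unfolding mat_analytic_on_def by auto

lemma opnorm_z0_nonneg: "opnorm (F z0) \<ge> 0"
  using opnorm_nonneg[OF F_carrier[OF z0_in]] .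

lemma vnorm_mult_le_opnorm_z0:
  assumes z: "z \<in> \<Omega>" and y: "y \<in> carrier_vec n"
  shows "vnorm (F z *\<^sub>v y) \<le> opnorm (F z0) * vnorm y"
proof -
  have "vnorm (F z *\<^sub>v y) \<le> opnorm (F z) * vnorm y" by (rule vnorm_mult_mat_vec_le[OF F_carrier[OF z] y])
  also have "\<dots> \<le> opnorm (F z0) * vnorm y"
    using opnorm_le z vnorm_nonneg[of y] by (simp add: mult_right_mono)
  finally show ?thesis .
qed

lemma extremal_vecs_carrier: "extremal_vecs \<subseteq> carrier_vec n"
  unfolding extremal_vecs_def by auto

lemma extremal_vec_constant:
  assumes x: "x \<in> extremal_vecs" and z: "z \<in> \<Omega>"
  shows "F z *\<^sub>v x = F z0 *\<^sub>v x"
proof (rule maximal_vec_constant[OF open_domain connected_domain analytic z0_in _ opnorm_z0_nonneg _ _ z])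
  show "vnorm (F z' *\<^sub>v y) \<le> opnorm (F z0) * vnorm y" if "z' \<in> \<Omega>" "y \<in> carrier_vec n" for z' y
    using vnorm_mult_le_opnorm_z0[OF that] .
  show "x \<in> carrier_vec n" "vnorm (F z0 *\<^sub>v x) = opnorm (F z0) * vnorm x"
    using x unfolding extremal_vecs_def by auto
qed

lemma extremal_vec_eigenvector:
  assumes x: "x \<in> extremal_vecs" and z: "z \<in> \<Omega>"
  shows "mat_adjoint (F z) *\<^sub>v (F z *\<^sub>v x) = complex_of_real (opnorm (F z0) ^ 2) \<cdot>\<^sub>v x"
proof (rule norm_attaining_imp_eigenvector[OF F_carrier[OF z]])
  show "vnorm (F z *\<^sub>v y) \<le> opnorm (F z0) * vnorm y" if "y \<in> carrier_vec n" for y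
    using vnorm_mult_le_opnorm_z0[OF z that] .
  show "x \<in> carrier_vec n" "vnorm (F z *\<^sub>v x) = opnorm (F z0) * vnorm x"
    using x extremal_vec_constant[OF x z] unfolding extremal_vecs_def by auto
qed

lemma extremal_vecs_eq_eigenspace:
  "extremal_vecs = {x \<in> carrier_vec n. (mat_adjoint (F z0) * F z0) *\<^sub>v x = complex_of_real (opnorm (F z0) ^ 2) \<cdot>\<^sub>v x}"
    (is "_ = ?E")
proof (intro equalityI subsetI)
  have A: "F z0 \<in> carrier_mat n n" and AH: "mat_adjoint (F z0) \<in> carrier_mat n n"
    using F_carrier[OF z0_in] mat_adjoint_carrier by auto
  fix x
  show "x \<in> ?E" if x: "x \<in> extremal_vecs"
    using extremal_vec_eigenvector[OF x z0_in] extremal_vecs_carrier x A AH by auto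
  show "x \<in> extremal_vecs" if "x \<in> ?E"
  proof -
    have x: "x \<in> carrier_vec n"
      and eigen: "mat_adjoint (F z0) *\<^sub>v (F z0 *\<^sub>v x) = complex_of_real (opnorm (F z0) ^ 2) \<cdot>\<^sub>v x"
      using that A AH by auto
    have "vnorm (F z0 *\<^sub>v x) ^ 2 = Re (vinner x (mat_adjoint (F z0) *\<^sub>v (F z0 *\<^sub>v x)))"
      unfolding vnorm_square using vinner_adjoint[OF A x, of "F z0 *\<^sub>v x"] A x by simp
    also have "\<dots> = (opnorm (F z0) * vnorm x) ^ 2"
      unfolding eigen using x by (simp add: vinner_smult_right vnorm_square power_mult_distrib)
    finally have "vnorm (F z0 *\<^sub>v x) = opnorm (F z0) * vnorm x"
      using vnorm_nonneg[of "F z0 *\<^sub>v x"] vnorm_nonneg[of x] opnorm_z0_nonneg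
      by (simp add: power2_eq_iff_nonneg)
    then show ?thesis unfolding extremal_vecs_def using x by simp
  qed
qed

lemma extremal_vecs_orthonormal_basis:
  obtains qs where "orthonormal_list n qs" "set qs \<subseteq> extremal_vecs"
    "extremal_vecs \<subseteq> cspan n (set qs)" "cdim n extremal_vecs = length qs"
proof -
  have "cspan n T \<subseteq> extremal_vecs" if "finite T" "T \<subseteq> extremal_vecs" for T
    using span_subset_eigenspace[OF _ that(2)[unfolded extremal_vecs_eq_eigenspace]]
      F_carrier[OF z0_in] mat_adjoint_carrier[OF F_carrier[OF z0_in]]
    unfolding extremal_vecs_eq_eigenspace by simp
  then obtain qs where qs: "orthonormal_list n qs" "set qs \<subseteq> extremal_vecs" "extremal_vecs \<subseteq> cspan n (set qs)"
    using orthonormal_basis_exists[OF extremal_vecs_carrier] by blast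
  show ?thesis
    using that[OF qs cdim_eq_length_orthonormal_basis[OF qs(1,2) extremal_vecs_carrier qs(3)]] .
qed

lemma block_decomposition_opnorm_zero:
  assumes c: "opnorm (F z0) = 0"
  shows "cdim n extremal_vecs = n" and "z \<in> \<Omega> \<Longrightarrow> F z = 0\<^sub>m n n"
proof -
  have zero: "F z *\<^sub>v y = 0\<^sub>v n" if z: "z \<in> \<Omega>" and y: "y \<in> carrier_vec n" for z y
  proof -
    have "vnorm (F z *\<^sub>v y) = 0"
      using vnorm_mult_le_opnorm_z0[OF z y] vnorm_nonneg[of "F z *\<^sub>v y"] c by simp
    then show ?thesis using vnorm_eq_0_iff[of "F z *\<^sub>v y" n] F_carrier[OF z] y by simp
  qed
  obtain qs where qs: "orthonormal_list n qs" "set qs \<subseteq> extremal_vecs" "extremal_vecs \<subseteq> cspan n (set qs)"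
    "cdim n extremal_vecs = length qs"
    by (rule extremal_vecs_orthonormal_basis)
  have "carrier_vec n \<subseteq> extremal_vecs"
  proof
    fix x :: "complex Matrix.vec" assume x: "x \<in> carrier_vec n"
    show "x \<in> extremal_vecs" using zero[OF z0_in x] x c unfolding extremal_vecs_def by simp
  qed
  then have "carrier_vec n \<subseteq> cspan n (set qs)" using qs(3) by (rule subset_trans)
  then show "cdim n extremal_vecs = n"
    using orthonormal_list_spanning_length[OF qs(1)] qs(4) by simp
  show "F z = 0\<^sub>m n n" if z: "z \<in> \<Omega>"
  proof (rule eq_matI)
    fix i j assume "i < dim_row (0\<^sub>m n n :: complex mat)" "j < dim_col (0\<^sub>m n n :: complex mat)"
    then have i: "i < n" and j: "j < n" by auto
    have "(F z *\<^sub>v unit_vec n j) $ i = (\<Sum>k<n. F z $$ (i,k) * unit_vec n j $ k)"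
      by (rule index_mult_mat_vec_sum[OF F_carrier[OF z] _ i]) simp
    also have "\<dots> = F z $$ (i,j)" using j by (simp add: if_distrib cong: if_cong)
    finally show "F z $$ (i,j) = 0\<^sub>m n n $$ (i,j)" using zero[OF z, of "unit_vec n j"] i j by simp
  qed (use F_carrier[OF z] in auto)
qed

text \<open>The columns of \<open>V\<^sup>*\<close> are an orthonormal basis \<open>qs\<close> of the extremal vectors completed by \<open>rs\<close>;
  those of \<open>U\<close> are the normalised images \<open>F z0 q / \<parallel>F z0\<parallel>\<close> completed by \<open>ts\<close>.\<close>

lemma block_decomposition_opnorm_pos:
  assumes "opnorm (F z0) > 0"
  obtains U V R where "unitary_mat n U" "unitary_mat n V" "mat_analytic_on (n - cdim n extremal_vecs) R \<Omega>"
    "\<And>z. z \<in> \<Omega> \<Longrightarrow> F z = U * four_block_mat (complex_of_real (opnorm (F z0)) \<cdot>\<^sub>m 1\<^sub>m (cdim n extremal_vecs))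
        (0\<^sub>m (cdim n extremal_vecs) (n - cdim n extremal_vecs)) (0\<^sub>m (n - cdim n extremal_vecs) (cdim n extremal_vecs))
        (R z) * V"
proof -
  define c where "c = opnorm (F z0)"
  define d where "d = cdim n extremal_vecs"
  have c: "c > 0" using assms unfolding c_def .
  obtain qs where qs: "orthonormal_list n qs" "set qs \<subseteq> extremal_vecs" "d = length qs"
    unfolding d_def by (rule extremal_vecs_orthonormal_basis)
  have eigen: "mat_adjoint (F z) *\<^sub>v (F z *\<^sub>v q) = complex_of_real (c^2) \<cdot>\<^sub>v q" if "q \<in> set qs" "z \<in> \<Omega>" for q z
    using extremal_vec_eigenvector[OF _ that(2)] qs(2) that(1) unfolding c_def by blast
  obtain rs where rs: "orthonormal_list n (qs @ rs)" "length (qs @ rs) = n"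
    using orthonormal_list_complete[OF qs(1)] by blast
  define ws where "ws = map (\<lambda>q. complex_of_real (1/c) \<cdot>\<^sub>v (F z0 *\<^sub>v q)) qs"
  have ws: "orthonormal_list n ws"
    unfolding ws_def using eigen[OF _ z0_in] by (rule orthonormal_list_map_scaled[OF F_carrier[OF z0_in] c qs(1)])
  obtain ts where ts: "orthonormal_list n (ws @ ts)" "length (ws @ ts) = n"
    using orthonormal_list_complete[OF ws] by blast
  define U where "U = mat_of_cols n (ws @ ts)"
  define Q where "Q = mat_of_cols n (qs @ rs)"
  define R where "R = (\<lambda>z. Matrix.mat (n - d) (n - d) (\<lambda>(i,j). vinner (F z *\<^sub>v (rs!j)) (ts!i)))"
  have U: "unitary_mat n U" and Q: "unitary_mat n Q" and V: "unitary_mat n (mat_adjoint Q)"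
    unfolding U_def Q_def using unitary_mat_of_cols_orthonormal[OF ts] unitary_mat_of_cols_orthonormal[OF rs]
    by auto
  have "mat_analytic_on (n - d) R \<Omega>" unfolding mat_analytic_on_def
  proof (intro conjI ballI allI impI)
    fix i j assume i: "i < n - d" and j: "j < n - d"
    have rj: "rs ! j \<in> carrier_vec n"
      using rs j qs(3) nth_mem[of j rs] unfolding orthonormal_list_def by auto
    have ti: "ts ! i \<in> carrier_vec n"
      using ts i qs(3) nth_mem[of i ts] unfolding orthonormal_list_def ws_def by auto
    have "(\<lambda>z. R z $$ (i,j)) holomorphic_on \<Omega>"
      using holomorphic_on_vinner[OF analytic rj ti] i j unfolding R_def by simp
    then show "(\<lambda>z. R z $$ (i,j)) analytic_on \<Omega>" using analytic_on_open[OF open_domain] by simp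
  qed (simp add: R_def)
  moreover have "F z = U * four_block_mat (complex_of_real c \<cdot>\<^sub>m 1\<^sub>m d) (0\<^sub>m d (n - d)) (0\<^sub>m (n - d) d) (R z)
      * mat_adjoint Q" if z: "z \<in> \<Omega>" for z
  proof (rule unitary_change_of_basis[OF U Q F_carrier[OF z]])
    show "mat_adjoint U * F z * Q = four_block_mat (complex_of_real c \<cdot>\<^sub>m 1\<^sub>m d) (0\<^sub>m d (n - d)) (0\<^sub>m (n - d) d) (R z)"
      unfolding U_def Q_def R_def
    proof (rule adjoint_mult_mult_block_form[OF F_carrier[OF z] F_carrier[OF z0_in] c rs ts ws_def _ _ _ qs(3)])
      show "F z *\<^sub>v q = F z0 *\<^sub>v q" if "q \<in> set qs" for q
        using extremal_vec_constant[OF _ z] qs(2) that by blast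
    qed (use eigen z z0_in in auto)
  qed
  ultimately show ?thesis using that[OF U V] unfolding c_def d_def by blast
qed

lemma block_decomposition:
  obtains U V R where "unitary_mat n U" "unitary_mat n V" "mat_analytic_on (n - cdim n extremal_vecs) R \<Omega>"
    "\<And>z. z \<in> \<Omega> \<Longrightarrow> F z = U * four_block_mat (complex_of_real (opnorm (F z0)) \<cdot>\<^sub>m 1\<^sub>m (cdim n extremal_vecs))
        (0\<^sub>m (cdim n extremal_vecs) (n - cdim n extremal_vecs)) (0\<^sub>m (n - cdim n extremal_vecs) (cdim n extremal_vecs))
        (R z) * V"
proof (cases "opnorm (F z0) = 0")
  case True
  have "F z = 1\<^sub>m n * four_block_mat (complex_of_real (opnorm (F z0)) \<cdot>\<^sub>m 1\<^sub>m n) (0\<^sub>m n 0) (0\<^sub>m 0 n) (0\<^sub>m 0 0) * 1\<^sub>m n"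
    if "z \<in> \<Omega>" for z
    using block_decomposition_opnorm_zero(2)[OF True that] True by (auto intro!: eq_matI)
  moreover have "mat_analytic_on 0 (\<lambda>_. 0\<^sub>m 0 0) \<Omega>" unfolding mat_analytic_on_def by simp
  ultimately show ?thesis
    using that[of "1\<^sub>m n" "1\<^sub>m n" "\<lambda>_. 0\<^sub>m 0 0"] unitary_mat_one block_decomposition_opnorm_zero(1)[OF True]
    by simp
next
  case False
  then have "opnorm (F z0) > 0" using opnorm_z0_nonneg by simp
  then show ?thesis by (rule block_decomposition_opnorm_pos) (rule that)
qed

end

theorem theorem8:
  fixes \<Omega> :: "complex set" and F :: "complex \<Rightarrow> complex mat" and n :: nat and z0 :: complex
  assumes "open \<Omega>" and "connected \<Omega>" and "\<Omega> \<noteq> {}"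
    and "mat_analytic_on n F \<Omega>"
    and "z0 \<in> \<Omega>"
    and "\<forall>z\<in>\<Omega>. opnorm (F z) \<le> opnorm (F z0)"
    and "d = cdim n {x \<in> carrier_vec n. vnorm (mult_mat_vec (F z0) x) = opnorm (F z0) * vnorm x}"
  shows "(\<exists>U V. unitary_mat n U \<and> unitary_mat n V \<and>
            (d = n \<longrightarrow> (\<forall>z\<in>\<Omega>. F z = opnorm (F z0) \<cdot>\<^sub>m (U * V))) \<and>
            (d < n \<longrightarrow> (\<exists>R. mat_analytic_on (n - d) R \<Omega> \<and>
               (\<forall>z\<in>\<Omega>. F z = U * four_block_mat (complex_of_real (opnorm (F z0)) \<cdot>\<^sub>m 1\<^sub>m d) (0\<^sub>m d (n - d))
                                             (0\<^sub>m (n - d) d) (R z) * V))))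
       \<and> (\<forall>x \<in> carrier_vec n. vnorm (mult_mat_vec (F z0) x) = opnorm (F z0) * vnorm x \<longrightarrow>
            (\<forall>z\<in>\<Omega>. mult_mat_vec (F z) x = mult_mat_vec (F z0) x) \<and>
            (\<forall>k\<ge>1. mult_mat_vec (mat_deriv n k F z0) x = 0\<^sub>v n))"
proof -
  interpret maximal_norm_at \<Omega> F n z0
    using assms by unfold_locales auto
  have d: "d = cdim n extremal_vecs" using assms(7) by (simp add: extremal_vecs_def)
  obtain U V R where U: "unitary_mat n U" and V: "unitary_mat n V" and R: "mat_analytic_on (n - d) R \<Omega>"
    and FUV: "\<And>z. z \<in> \<Omega> \<Longrightarrow> F z = U * four_block_mat (complex_of_real (opnorm (F z0)) \<cdot>\<^sub>m 1\<^sub>m d)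
        (0\<^sub>m d (n - d)) (0\<^sub>m (n - d) d) (R z) * V"
    using block_decomposition[folded d] by blast
  have full: "F z = opnorm (F z0) \<cdot>\<^sub>m (U * V)" if "d = n" "z \<in> \<Omega>" for z
  proof -
    have "R z \<in> carrier_mat 0 0" using R that unfolding mat_analytic_on_def by simp
    then show ?thesis
      using FUV[OF that(2)] four_block_full[of _ n "R z"] that U V mult_smult_one_mult[of U n V]
      unfolding unitary_mat_def by simp
  qed
  have extremal: "(\<forall>z\<in>\<Omega>. F z *\<^sub>v x = F z0 *\<^sub>v x) \<and> (\<forall>k\<ge>1. mat_deriv n k F z0 *\<^sub>v x = 0\<^sub>v n)"
    if "x \<in> extremal_vecs" for x
    using extremal_vec_constant[OF that] extremal_vecs_carrier that
      mat_deriv_mult_vec_eq_0[OF open_domain analytic z0_in] by blast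
  show ?thesis
    using U V R FUV full extremal unfolding extremal_vecs_def by blast
qed

end
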